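(* Let $V$ be a vertex operator algebra. A weak $V$-module is a $C_1$-cofinite grading-restricted generalized $V$-module if and only if it is a $C_1$-cofinite $\mathbb N$-gradable weak $V$-module. That is, the category of $C_1$-cofinite $\mathbb N$-gradable weak $V$-modules equals $\mathcal C^1_V$.
   Context: A weak $V$-module $W$ is $\mathbb N$-gradable if there is a grading $W=\bigoplus_{n\in\mathbb N}W(n)$ with $v_mW(n)\subseteq W(\mathrm{wt}\,v+n-m-1)$ for homogeneous $v\in V$. $C_1(W)=\mathrm{span}\{v_{-1}w: v\in\bigoplus_{n\ge1}V_{(n)},\ w\in W\}$; $W$ is $C_1$-cofinite if $\dim W/C_1(W)<\infty$. A generalized $V$-module is a weak module that is the direct sum of generalized $L(0)$-eigenspaces $W_{[h]}$; it is grading-restricted if each $W_{[h]}$ is finite dimensional and $W_{[h+n]}=0$ for $n\in\mathbb Z$ sufficiently negative. $\mathcal C^1_V$ is the category of $C_1$-cofinite grading-restricted generalized $V$-modules. *)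

theory Defs
  imports Complex_Main
begin

text \<open>
A vertex operator on
a space W is modelled by its modes: Y u n w is the mode u_n applied to w, i.e.
Y(u,x) w = sum over n of (u_n w) x^(-n-1).
\<close>

definition fin_dim :: "(complex \<Rightarrow> 'w::ab_group_add \<Rightarrow> 'w) \<Rightarrow> 'w set \<Rightarrow> bool" where
  "fin_dim sc S \<longleftrightarrow> (\<exists>B. finite B \<and> B \<subseteq> S \<and> module.span sc B = S)"

definition direct_sum_decomp ::
  "(complex \<Rightarrow> 'w::ab_group_add \<Rightarrow> 'w) \<Rightarrow> 'i set \<Rightarrow> ('i \<Rightarrow> 'w set) \<Rightarrow> bool" where
  "direct_sum_decomp sc I A \<longleftrightarrow>
     (\<forall>i\<in>I. module.subspace sc (A i)) \<and>
     (\<forall>w. \<exists>F f. finite F \<and> F \<subseteq> I \<and> (\<forall>i\<in>F. f i \<in> A i) \<and> w = (\<Sum>i\<in>F. f i)) \<and>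
     (\<forall>F f. finite F \<and> F \<subseteq> I \<and> (\<forall>i\<in>F. f i \<in> A i) \<and> (\<Sum>i\<in>F. f i) = 0
            \<longrightarrow> (\<forall>i\<in>F. f i = 0))"

definition modes_bilinear ::
  "(complex \<Rightarrow> 'v::ab_group_add \<Rightarrow> 'v) \<Rightarrow> (complex \<Rightarrow> 'w::ab_group_add \<Rightarrow> 'w)
   \<Rightarrow> ('v \<Rightarrow> int \<Rightarrow> 'w \<Rightarrow> 'w) \<Rightarrow> bool" where
  "modes_bilinear scV scW Y \<longleftrightarrow>
     (\<forall>u n. Vector_Spaces.linear scW scW (Y u n)) \<and>
     (\<forall>n w. Vector_Spaces.linear scV scW (\<lambda>u. Y u n w))"

text \<open>Truncation: Y(u,x)w has only finitely many negative powers of x.\<close>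
definition truncation :: "('v \<Rightarrow> int \<Rightarrow> 'w \<Rightarrow> 'w::zero) \<Rightarrow> bool" where
  "truncation Y \<longleftrightarrow> (\<forall>u w. \<exists>N. \<forall>n\<ge>N. Y u n w = 0)"

text \<open>The Jacobi identity, written in components (Borcherds identity):
  for all u v in V, w in W and m n r in Z,
  sum_{i>=0} binom(m,i) (u_{r+i} v)_{m+n-i} w
   = sum_{i>=0} (-1)^i binom(r,i) (u_{m+r-i} v_{n+i} w - (-1)^r v_{n+r-i} u_{m+i} w).
  Given truncation, all sums are finite; we require equality of the partial sums
  for all sufficiently large cut-offs.\<close>
definition jacobi_identity ::
  "(complex \<Rightarrow> 'w::ab_group_add \<Rightarrow> 'w) \<Rightarrow> ('v \<Rightarrow> int \<Rightarrow> 'v \<Rightarrow> 'v)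
   \<Rightarrow> ('v \<Rightarrow> int \<Rightarrow> 'w \<Rightarrow> 'w) \<Rightarrow> bool" where
  "jacobi_identity scW YV YW \<longleftrightarrow>
     (\<forall>u v w m n r. \<exists>N. \<forall>K\<ge>N.
        (\<Sum>i<K. scW ((of_int m :: complex) gchoose i) (YW (YV u (r + int i) v) (m + n - int i) w))
      = (\<Sum>i<K. scW ((-1) ^ i * ((of_int r :: complex) gchoose i))
            (YW u (m + r - int i) (YW v (n + int i) w)
             - scW ((-1) powi r) (YW v (n + r - int i) (YW u (m + int i) w)))))"

definition is_VOA ::
  "(complex \<Rightarrow> 'v::ab_group_add \<Rightarrow> 'v) \<Rightarrow> (int \<Rightarrow> 'v set) \<Rightarrow> ('v \<Rightarrow> int \<Rightarrow> 'v \<Rightarrow> 'v)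
   \<Rightarrow> 'v \<Rightarrow> 'v \<Rightarrow> complex \<Rightarrow> bool" where
  "is_VOA sc Vg Y vac \<omega> c \<longleftrightarrow>
     vector_space sc \<and>
     direct_sum_decomp sc UNIV Vg \<and>
     (\<forall>n. fin_dim sc (Vg n)) \<and>
     (\<exists>N. \<forall>n\<le>N. Vg n = {0}) \<and>
     modes_bilinear sc sc Y \<and>
     truncation Y \<and>
     (\<forall>n v. Y vac n v = (if n = -1 then v else 0)) \<and>
     (\<forall>v. Y v (-1) vac = v \<and> (\<forall>n\<ge>0. Y v n vac = 0)) \<and>
     jacobi_identity sc Y Y \<and>
     \<omega> \<in> Vg 2 \<and>
     (\<forall>m n v. Y \<omega> (m + 1) (Y \<omega> (n + 1) v) - Y \<omega> (n + 1) (Y \<omega> (m + 1) v)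
        = sc (of_int (m - n)) (Y \<omega> (m + n + 1) v)
          + sc ((of_int m ^ 3 - of_int m) / 12 * (if m + n = 0 then 1 else 0) * c) v) \<and>
     (\<forall>n v. v \<in> Vg n \<longrightarrow> Y \<omega> 1 v = sc (of_int n) v) \<and>
     (\<forall>u n. Y (Y \<omega> 0 u) n = (\<lambda>w. sc (- of_int n) (Y u (n - 1) w)))"

definition is_weak_module ::
  "(complex \<Rightarrow> 'v::ab_group_add \<Rightarrow> 'v) \<Rightarrow> ('v \<Rightarrow> int \<Rightarrow> 'v \<Rightarrow> 'v) \<Rightarrow> 'v
   \<Rightarrow> (complex \<Rightarrow> 'w::ab_group_add \<Rightarrow> 'w) \<Rightarrow> ('v \<Rightarrow> int \<Rightarrow> 'w \<Rightarrow> 'w) \<Rightarrow> bool" where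
  "is_weak_module scV YV vac scW YW \<longleftrightarrow>
     vector_space scW \<and>
     modes_bilinear scV scW YW \<and>
     truncation YW \<and>
     (\<forall>n w. YW vac n w = (if n = -1 then w else 0)) \<and>
     jacobi_identity scW YV YW"

definition N_gradable ::
  "(int \<Rightarrow> 'v set) \<Rightarrow> (complex \<Rightarrow> 'w::ab_group_add \<Rightarrow> 'w) \<Rightarrow> ('v \<Rightarrow> int \<Rightarrow> 'w \<Rightarrow> 'w) \<Rightarrow> bool" where
  "N_gradable Vg scW YW \<longleftrightarrow>
     (\<exists>Wn :: nat \<Rightarrow> 'w set. direct_sum_decomp scW UNIV Wn \<and>
        (\<forall>k m n v w. v \<in> Vg k \<longrightarrow> w \<in> Wn n \<longrightarrow>
           (if k + int n - m - 1 \<ge> 0 then YW v m w \<in> Wn (nat (k + int n - m - 1))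
            else YW v m w = 0)))"

definition C1 ::
  "(complex \<Rightarrow> 'v::ab_group_add \<Rightarrow> 'v) \<Rightarrow> (int \<Rightarrow> 'v set) \<Rightarrow> (complex \<Rightarrow> 'w::ab_group_add \<Rightarrow> 'w)
   \<Rightarrow> ('v \<Rightarrow> int \<Rightarrow> 'w \<Rightarrow> 'w) \<Rightarrow> 'w set" where
  "C1 scV Vg scW YW = module.span scW
     {YW v (-1) w | v w. v \<in> module.span scV (\<Union>n\<in>{1..}. Vg n)}"

text \<open>dim W / C_1(W) < infinity, i.e. W = span F + C_1(W) for a finite set F.\<close>
definition C1_cofinite ::
  "(complex \<Rightarrow> 'v::ab_group_add \<Rightarrow> 'v) \<Rightarrow> (int \<Rightarrow> 'v set) \<Rightarrow> (complex \<Rightarrow> 'w::ab_group_add \<Rightarrow> 'w)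
   \<Rightarrow> ('v \<Rightarrow> int \<Rightarrow> 'w \<Rightarrow> 'w) \<Rightarrow> bool" where
  "C1_cofinite scV Vg scW YW \<longleftrightarrow>
     (\<exists>F. finite F \<and> module.span scW (F \<union> C1 scV Vg scW YW) = UNIV)"

text \<open>Generalized L(0)-eigenspace W_[h], with L(0) = omega_1.\<close>
definition gen_eigenspace ::
  "(complex \<Rightarrow> 'w::ab_group_add \<Rightarrow> 'w) \<Rightarrow> ('v \<Rightarrow> int \<Rightarrow> 'w \<Rightarrow> 'w) \<Rightarrow> 'v \<Rightarrow> complex \<Rightarrow> 'w set" where
  "gen_eigenspace scW YW \<omega> h = {w. \<exists>k. ((\<lambda>x. YW \<omega> 1 x - scW h x) ^^ k) w = 0}"

definition generalized_module ::
  "(complex \<Rightarrow> 'w::ab_group_add \<Rightarrow> 'w) \<Rightarrow> ('v \<Rightarrow> int \<Rightarrow> 'w \<Rightarrow> 'w) \<Rightarrow> 'v \<Rightarrow> bool" where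
  "generalized_module scW YW \<omega> \<longleftrightarrow> direct_sum_decomp scW UNIV (gen_eigenspace scW YW \<omega>)"

definition grading_restricted_generalized_module ::
  "(complex \<Rightarrow> 'w::ab_group_add \<Rightarrow> 'w) \<Rightarrow> ('v \<Rightarrow> int \<Rightarrow> 'w \<Rightarrow> 'w) \<Rightarrow> 'v \<Rightarrow> bool" where
  "grading_restricted_generalized_module scW YW \<omega> \<longleftrightarrow>
     generalized_module scW YW \<omega> \<and>
     (\<forall>h. fin_dim scW (gen_eigenspace scW YW \<omega> h)) \<and>
     (\<forall>h. \<exists>N. \<forall>n::int. n \<le> N \<longrightarrow> gen_eigenspace scW YW \<omega> (h + of_int n) = {0})"

end

theory Submission
  imports Defs "HOL-Computational_Algebra.Computational_Algebra"
begin

text \<open>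
Write \<open>L(0) = \<omega>\<^sub>1\<close>. The Jacobi identity gives \<open>[L(0), v\<^sub>m] = (wt v - m - 1) v\<^sub>m\<close>,
so modes shift generalized \<open>L(0)\<close>-eigenvalues by integers.

If \<open>W\<close> is grading restricted, every coset \<open>h + \<int>\<close> of eigenvalues has a lowest member, and
grading the eigenspace \<open>W\<^sub>[\<^sub>h\<^sub>]\<close> by the distance \<open>n\<close> of \<open>h\<close> above that lowest member is an
\<open>\<nat>\<close>-grading compatible with the modes.

Conversely, let \<open>W = \<Oplus> W(n)\<close> be \<open>\<nat>\<close>-graded and \<open>W = span F + C\<^sub>1(W)\<close> with \<open>F\<close> finite.
Projecting to degree \<open>n\<close> gives \<open>W(n) = \<pi>\<^sub>n(span F) + \<Sum>\<^sub>k\<^sub>\<ge>\<^sub>1 (V\<^sub>(\<^sub>k\<^sub>))\<^sub>-\<^sub>1 W(n - k)\<close>,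
so by induction each \<open>W(n)\<close> is finite dimensional, and every vector of \<open>W(n)\<close> is annihilated by a
polynomial in \<open>L(0)\<close> whose roots lie in \<open>admissible n = {r + n - d}\<close>, where \<open>r\<close> ranges over the roots of
annihilating polynomials of the finitely many vectors \<open>\<pi>\<^sub>d f\<close>, \<open>f \<in> F\<close>. Since \<open>L(0)\<close> is
locally finite, \<open>W\<close> is the direct sum of its generalized eigenspaces; the eigenvalue \<open>h\<close>
occurs only in the finitely many \<open>W(n)\<close> with \<open>h \<in> admissible n\<close>, and the real parts of the
eigenvalues in \<open>h + \<int>\<close> are bounded below.
\<close>

definition decomposable :: "('i \<Rightarrow> 'w::comm_monoid_add set) \<Rightarrow> 'w \<Rightarrow> bool" where
  "decomposable A w \<longleftrightarrow> (\<exists>F f. finite F \<and> (\<forall>i\<in>F. f i \<in> A i) \<and> w = (\<Sum>i\<in>F. f i))"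

lemma decomposable_zero: "decomposable A 0"
  unfolding decomposable_def by (rule exI[of _ "{}"]) auto

lemma decomposable_component: "x \<in> A i \<Longrightarrow> decomposable A x"
  unfolding decomposable_def by (rule exI[of _ "{i}"], rule exI[of _ "\<lambda>_. x"]) auto

lemma sum_pad_union:
  fixes f :: "'i \<Rightarrow> 'w::comm_monoid_add"
  assumes "finite F" "finite G"
  shows "(\<Sum>i\<in>F. f i) = (\<Sum>i\<in>F \<union> G. if i \<in> F then f i else 0)"
  using assms by (intro sum.mono_neutral_cong_left) auto

lemma sum_eq_single:
  assumes "finite S" "i0 \<in> S" "\<And>i. i \<in> S \<Longrightarrow> i \<noteq> i0 \<Longrightarrow> f i = 0"
  shows "sum f S = f i0"
  using assms by (simp add: sum.remove sum.neutral)

lemma decomposable_add: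
  assumes zero: "\<And>i. 0 \<in> A i" and add: "\<And>i x y. x \<in> A i \<Longrightarrow> y \<in> A i \<Longrightarrow> x + y \<in> A i"
    and "decomposable A x" "decomposable A y"
  shows "decomposable A (x + y)"
proof -
  obtain F f where F: "finite F" "\<forall>i\<in>F. f i \<in> A i" "x = (\<Sum>i\<in>F. f i)"
    using assms(3) unfolding decomposable_def by auto
  obtain G g where G: "finite G" "\<forall>i\<in>G. g i \<in> A i" "y = (\<Sum>i\<in>G. g i)"
    using assms(4) unfolding decomposable_def by auto
  define h where "h i = (if i \<in> F then f i else 0) + (if i \<in> G then g i else 0)" for i
  have "x + y = (\<Sum>i\<in>F \<union> G. h i)"
    unfolding h_def sum.distrib F(3) G(3)
    using sum_pad_union[OF F(1) G(1), of f] sum_pad_union[OF G(1) F(1), of g] by (simp add: Un_commute)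
  moreover have "h i \<in> A i" for i
    unfolding h_def using F(2) G(2) zero add by simp
  ultimately show ?thesis
    unfolding decomposable_def using F(1) G(1) by blast
qed

lemma decomposable_sum:
  assumes "\<And>i. 0 \<in> A i" "\<And>i x y. x \<in> A i \<Longrightarrow> y \<in> A i \<Longrightarrow> x + y \<in> A i"
    and "\<forall>j\<in>J. decomposable A (g j)"
  shows "decomposable A (\<Sum>j\<in>J. g j)"
  using assms(3)
  by (induction J rule: infinite_finite_induct)
    (simp_all add: decomposable_zero decomposable_add[OF assms(1,2)])

lemma linear_power_bezout:
  assumes "poly s a \<noteq> 0"
  shows "\<exists>u v. u * [:-a, 1:] ^ m + v * s = (1::'a::field poly)"
proof (induction m)
  case 0
  then show ?case by (intro exI[of _ 1] exI[of _ 0]) simp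
next
  case (Suc m)
  then obtain u v where uv: "u * [:-a, 1:] ^ m = 1 - v * s"
    by (metis add_diff_cancel)
  define c where "c = poly s a"
  define r where "r = synthetic_div s a"
  have s: "s = [:-a, 1:] * r + [:c:]"
    unfolding c_def r_def by (rule synthetic_div_correct'[symmetric])
  define u1 where "u1 = smult (- 1 / c) r"
  define v1 where "v1 = [:1 / c:]"
  have "u1 * [:-a, 1:] + v1 * s
      = smult (-1 / c) (r * [:-a, 1:]) + smult (1 / c) ([:-a, 1:] * r + [:c:])"
    unfolding u1_def v1_def s
    by (simp only: mult_smult_left mult_pCons_left mult_zero_left pCons_0_0 add_0_right)
  also have "\<dots> = smult (1 / c) [:c:]"
    by (simp add: smult_add_right mult.commute)
  also have "\<dots> = 1"
    using assms by (simp add: c_def one_pCons)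
  finally have u1: "u1 * [:-a, 1:] = 1 - v1 * s"
    by (simp add: eq_diff_eq)
  have "(u * u1) * [:-a, 1:] ^ Suc m = (u * [:-a, 1:] ^ m) * (u1 * [:-a, 1:])"
    by (simp add: algebra_simps)
  also have "\<dots> = (1 - v * s) * (1 - v1 * s)"
    by (simp only: uv u1)
  finally have "(u * u1) * [:-a, 1:] ^ Suc m + (v + v1 - v * v1 * s) * s = 1"
    by (simp add: algebra_simps)
  then show ?case by blast
qed

locale linear_endo = vector_space sc for sc :: "complex \<Rightarrow> 'w::ab_group_add \<Rightarrow> 'w" +
  fixes L :: "'w \<Rightarrow> 'w"
  assumes L_add: "L (x + y) = L x + L y" and L_scale: "L (sc c x) = sc c (L x)"
begin

definition polyL :: "complex poly \<Rightarrow> 'w \<Rightarrow> 'w" where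
  "polyL p = foldr (\<lambda>c f w. sc c w + f (L w)) (coeffs p) (\<lambda>_. 0)"

definition gen_eig :: "complex \<Rightarrow> 'w set" where
  "gen_eig h = {w. \<exists>t. ((\<lambda>x. L x - sc h x) ^^ t) w = 0}"

lemma L_zero [simp]: "L 0 = 0"
  by (metis add_cancel_right_right L_add)

lemma polyL_0 [simp]: "polyL 0 w = 0"
  by (simp add: polyL_def)

lemma polyL_pCons: "polyL (pCons c p) w = sc c w + polyL p (L w)"
  by (cases "p = 0 \<and> c = 0") (auto simp: polyL_def cCons_def)

lemma polyL_const: "polyL [:c:] w = sc c w"
  by (simp add: polyL_pCons)

lemma polyL_1 [simp]: "polyL 1 w = w"
  by (simp add: one_pCons polyL_const)

lemma polyL_linear_right:
  "polyL p (x + y) = polyL p x + polyL p y \<and> polyL p (sc c x) = sc c (polyL p x)"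
  by (induction p arbitrary: x y rule: pCons_induct)
    (simp_all add: polyL_pCons L_add L_scale scale_right_distrib algebra_simps)

lemma polyL_add_right: "polyL p (x + y) = polyL p x + polyL p y"
  using polyL_linear_right by blast

lemma polyL_scale_right: "polyL p (sc c x) = sc c (polyL p x)"
  using polyL_linear_right by blast

lemma polyL_zero_right [simp]: "polyL p 0 = 0"
  by (metis polyL_scale_right scale_zero_left)

lemma polyL_sum_right: "polyL p (\<Sum>i\<in>I. f i) = (\<Sum>i\<in>I. polyL p (f i))"
  by (induction I rule: infinite_finite_induct) (simp_all add: polyL_add_right)

lemma polyL_add: "polyL (p + q) w = polyL p w + polyL q w"
  by (induction p q arbitrary: w rule: poly_induct2)
    (simp_all add: polyL_pCons scale_left_distrib algebra_simps)

lemma polyL_diff: "polyL (p - q) w = polyL p w - polyL q w"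
  by (metis polyL_add diff_add_cancel eq_diff_eq)

lemma polyL_smult: "polyL (smult c p) w = sc c (polyL p w)"
  by (induction p arbitrary: w rule: pCons_induct) (simp_all add: polyL_pCons scale_right_distrib)

lemma polyL_sum: "polyL (\<Sum>i\<in>I. f i) w = (\<Sum>i\<in>I. polyL (f i) w)"
  by (induction I rule: infinite_finite_induct) (simp_all add: polyL_add)

lemma polyL_L: "polyL p (L w) = L (polyL p w)"
  by (induction p arbitrary: w rule: pCons_induct) (simp_all add: polyL_pCons L_add L_scale)

lemma polyL_mult: "polyL (p * q) w = polyL p (polyL q w)"
proof (induction p arbitrary: w rule: pCons_induct)
  case 0
  then show ?case by simp
next
  case (pCons a p)
  have "polyL (pCons a p * q) w = sc a (polyL q w) + polyL (pCons 0 (p * q)) w"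
    by (simp add: polyL_add polyL_smult)
  also have "\<dots> = polyL (pCons a p) (polyL q w)"
    by (simp add: polyL_pCons pCons.IH polyL_L)
  finally show ?case .
qed

lemma polyL_commute: "polyL p (polyL q w) = polyL q (polyL p w)"
  by (metis polyL_mult mult.commute)

lemma polyL_monom: "polyL (monom c j) w = sc c ((L ^^ j) w)"
  by (induction j arbitrary: w) (simp_all add: monom_0 polyL_const monom_Suc polyL_pCons funpow_swap1)

lemma polyL_linear_power: "polyL ([:-a, 1:] ^ t) w = ((\<lambda>x. L x - sc a x) ^^ t) w"
proof (induction t arbitrary: w)
  case 0
  then show ?case by simp
next
  case (Suc t)
  have "polyL ([:-a, 1:] ^ Suc t) w = polyL [:-a, 1:] (polyL ([:-a, 1:] ^ t) w)"
    by (metis polyL_mult power_Suc)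
  then show ?case
    by (simp add: Suc polyL_pCons polyL_const scale_minus_left)
qed

lemma polyL_eigenvector: "L y = sc h y \<Longrightarrow> polyL p y = sc (poly p h) y"
  by (induction p arbitrary: y rule: pCons_induct)
    (simp_all add: polyL_pCons polyL_scale_right scale_left_distrib)

lemma gen_eig_iff: "w \<in> gen_eig h \<longleftrightarrow> (\<exists>t. polyL ([:-h, 1:] ^ t) w = 0)"
  by (simp add: gen_eig_def polyL_linear_power)

lemma gen_eig_polyL: "w \<in> gen_eig h \<Longrightarrow> polyL q w \<in> gen_eig h"
  unfolding gen_eig_iff by (metis polyL_commute polyL_zero_right)

lemma subspace_gen_eig: "subspace (gen_eig h)"
proof (rule subspaceI)
  show "0 \<in> gen_eig h"
    unfolding gen_eig_iff by simp
next
  fix x y assume "x \<in> gen_eig h" "y \<in> gen_eig h"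
  then obtain t s where t: "polyL ([:-h, 1:] ^ t) x = 0" and s: "polyL ([:-h, 1:] ^ s) y = 0"
    unfolding gen_eig_iff by blast
  have "polyL ([:-h, 1:] ^ (t + s)) (x + y)
      = polyL ([:-h, 1:] ^ s) (polyL ([:-h, 1:] ^ t) x) + polyL ([:-h, 1:] ^ t) (polyL ([:-h, 1:] ^ s) y)"
    by (simp add: power_add polyL_mult polyL_add_right polyL_commute[of "[:-h, 1:] ^ t"])
  then have "polyL ([:-h, 1:] ^ (t + s)) (x + y) = 0"
    by (simp add: s t)
  then show "x + y \<in> gen_eig h"
    unfolding gen_eig_iff by blast
next
  fix c x assume "x \<in> gen_eig h"
  then show "sc c x \<in> gen_eig h"
    unfolding gen_eig_iff by (metis polyL_scale_right scale_zero_right)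
qed

text \<open>The last nonzero vector \<open>(L - h)\<^sup>t w\<close> of the Jordan chain of \<open>w\<close> is an eigenvector killed
  by \<open>p\<close>.\<close>
lemma poly_eq_0_if_polyL_eq_0:
  assumes "polyL p w = 0" "w \<in> gen_eig h" "w \<noteq> 0"
  shows "poly p h = 0"
proof -
  obtain t where "polyL ([:-h, 1:] ^ t) w = 0"
    using assms(2) unfolding gen_eig_iff by blast
  then show ?thesis
    using assms(1,3)
  proof (induction t arbitrary: w)
    case 0
    then show ?case by simp
  next
    case (Suc t)
    let ?y = "polyL ([:-h, 1:] ^ t) w"
    have "polyL [:-h, 1:] ?y = 0"
      using Suc.prems(1) by (metis polyL_mult power_Suc)
    then have "L ?y = sc h ?y"
      by (simp add: polyL_pCons polyL_const scale_minus_left)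
    moreover have "polyL p ?y = 0"
      by (metis polyL_commute polyL_zero_right Suc.prems(2))
    ultimately have "sc (poly p h) ?y = 0"
      using polyL_eigenvector[of ?y h p] by simp
    then show ?case
      using Suc.IH[OF _ Suc.prems(2,3)] by auto
  qed
qed

lemma gen_eig_disjoint: "a \<noteq> b \<Longrightarrow> w \<in> gen_eig a \<Longrightarrow> w \<in> gen_eig b \<Longrightarrow> w = 0"
proof (rule ccontr)
  assume "a \<noteq> b" "w \<in> gen_eig a" "w \<in> gen_eig b" "w \<noteq> 0"
  moreover obtain t where "polyL ([:-a, 1:] ^ t) w = 0"
    using \<open>w \<in> gen_eig a\<close> unfolding gen_eig_iff by blast
  ultimately have "poly ([:-a, 1:] ^ t) b = 0"
    using poly_eq_0_if_polyL_eq_0 by blast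
  then show False
    using \<open>a \<noteq> b\<close> by (simp add: poly_power)
qed

lemma gen_eig_independent:
  assumes "finite F" "\<forall>i\<in>F. f i \<in> gen_eig i" "(\<Sum>i\<in>F. f i) = 0"
  shows "\<forall>i\<in>F. f i = 0"
  using assms
proof (induction F arbitrary: f rule: finite_induct)
  case empty
  then show ?case by simp
next
  case (insert a F)
  obtain t where t: "polyL ([:-a, 1:] ^ t) (f a) = 0"
    using insert.prems(1) unfolding gen_eig_iff by blast
  let ?Q = "polyL ([:-a, 1:] ^ t)"
  have "(\<Sum>i\<in>F. ?Q (f i)) = ?Q (\<Sum>i\<in>insert a F. f i)"
    using insert.hyps by (simp add: polyL_add_right polyL_sum_right t)
  then have Q0: "\<forall>i\<in>F. ?Q (f i) = 0"
    using insert.IH[of "\<lambda>i. ?Q (f i)"] insert.prems gen_eig_polyL by simp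
  have F0: "\<forall>i\<in>F. f i = 0"
  proof
    fix i assume "i \<in> F"
    then have "f i \<in> gen_eig a" "f i \<in> gen_eig i" "a \<noteq> i"
      using Q0 insert.prems(1) insert.hyps(2) unfolding gen_eig_iff by auto
    then show "f i = 0"
      using gen_eig_disjoint by blast
  qed
  then show ?case
    using insert.prems(2) insert.hyps by simp
qed

text \<open>Primary decomposition, by induction on the degree: split off the maximal power \<open>(x - z)\<^sup>m\<close>
  of a root and use Bezout.\<close>
lemma decomposable_gen_eig_if_polyL_eq_0:
  "p \<noteq> 0 \<Longrightarrow> polyL p w = 0 \<Longrightarrow> decomposable gen_eig w"
proof (induction "degree p" arbitrary: p w rule: less_induct)
  case less
  show ?case
  proof (cases "degree p = 0")
    case True
    then have "p = [:coeff p 0:]" and "coeff p 0 \<noteq> 0"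
      using less.prems(1) by (simp_all add: degree_0_id flip: leading_coeff_0_iff)
    then have "w = 0"
      using less.prems(2) by (metis polyL_const scale_eq_0_iff)
    then show ?thesis
      by (simp add: decomposable_zero)
  next
    case False
    then obtain z where "poly p z = 0"
      using fundamental_theorem_of_algebra_alt by (metis degree_pCons_0)
    define m where "m = order z p"
    define q where "q = [:-z, 1:] ^ m"
    obtain s where ps: "p = q * s" and nd: "\<not> [:-z, 1:] dvd s"
      using order_decomp[OF less.prems(1)] unfolding q_def m_def by blast
    have "poly s z \<noteq> 0"
      using nd by (simp add: poly_eq_0_iff_dvd)
    then obtain u v where uv: "u * q + v * s = 1"
      using linear_power_bezout unfolding q_def by blast
    have "m \<noteq> 0"
      using \<open>poly p z = 0\<close> less.prems(1) order_root unfolding m_def by blast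
    moreover have "s \<noteq> 0"
      using ps less.prems(1) by auto
    moreover have "degree q = m"
      unfolding q_def by (simp add: degree_linear_power)
    ultimately have "degree s < degree p"
      using ps by (simp add: degree_mult_eq q_def)
    moreover have "polyL s (polyL (u * q) w) = 0"
      by (metis ps polyL_mult polyL_zero_right less.prems(2) mult.commute mult.left_commute)
    ultimately have "decomposable gen_eig (polyL (u * q) w)"
      using less.hyps \<open>s \<noteq> 0\<close> by blast
    moreover have "polyL q (polyL (v * s) w) = 0"
      by (metis ps polyL_mult polyL_zero_right less.prems(2) mult.commute mult.left_commute)
    then have "decomposable gen_eig (polyL (v * s) w)"
      unfolding q_def by (intro decomposable_component[of _ _ z]) (auto simp: gen_eig_iff)
    moreover have "w = polyL (u * q) w + polyL (v * s) w"
      by (metis polyL_1 polyL_add uv)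
    ultimately show ?thesis
      using subspace_gen_eig by (metis decomposable_add subspace_0 subspace_add)
  qed
qed

lemma exists_annihilating_poly:
  assumes "finite B" and "\<And>j. (L ^^ j) w \<in> span B"
  shows "\<exists>p. p \<noteq> 0 \<and> polyL p w = 0"
proof -
  define g where "g j = (L ^^ j) w" for j
  define N where "N = card B"
  show ?thesis
  proof (cases "inj_on g {..N}")
    case False
    then obtain i j where ij: "i \<noteq> j" "g i = g j"
      unfolding inj_on_def by blast
    define p where "p = monom (1::complex) i - monom 1 j"
    have "coeff p i = 1"
      using ij unfolding p_def by simp
    moreover have "polyL p w = 0"
      unfolding p_def using ij by (simp add: polyL_diff polyL_monom g_def)
    ultimately show ?thesis
      by (metis one_neq_zero coeff_0)
  next
    case True
    have "g ` {..N} \<subseteq> span B"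
      using assms(2) unfolding g_def by blast
    moreover have "\<not> card (g ` {..N}) \<le> card B"
      using True by (simp add: card_image N_def)
    ultimately have "dependent (g ` {..N})"
      using independent_span_bound[OF assms(1)] by blast
    then obtain T u where T: "finite T" "T \<subseteq> g ` {..N}" "(\<Sum>v\<in>T. sc (u v) v) = 0"
      and "\<exists>v\<in>T. u v \<noteq> 0"
      unfolding dependent_explicit by blast
    then obtain j0 where j0: "j0 \<le> N" "g j0 \<in> T" "u (g j0) \<noteq> 0"
      by blast
    define c where "c j = (if g j \<in> T then u (g j) else 0)" for j
    define p where "p = (\<Sum>j\<le>N. monom (c j) j)"
    have "coeff p j0 \<noteq> 0"
      unfolding p_def coeff_sum_monom[OF j0(1)] using j0 c_def by simp
    have "polyL p w = (\<Sum>j\<le>N. sc (c j) (g j))"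
      unfolding p_def by (simp add: polyL_sum polyL_monom g_def)
    also have "\<dots> = (\<Sum>x\<in>g ` {..N}. sc (if x \<in> T then u x else 0) x)"
      using True by (simp add: sum.reindex c_def)
    also have "\<dots> = (\<Sum>x\<in>T. sc (u x) x)"
      using T(1,2) by (intro sum.mono_neutral_cong_right) auto
    finally have "polyL p w = 0"
      using T(3) by simp
    with \<open>coeff p j0 \<noteq> 0\<close> show ?thesis
      by (metis coeff_0)
  qed
qed

lemma polyL_pcompose_shift:
  assumes V_add: "\<And>x y. V (x + y) = V x + V y" and V_scale: "\<And>c x. V (sc c x) = sc c (V x)"
    and LV: "\<And>y. L (V y) = V (L y) + sc j (V y)"
  shows "polyL (pcompose p [:-j, 1:]) (V y) = V (polyL p y)"
proof (induction p arbitrary: y rule: pCons_induct)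
  case 0
  have "V 0 = 0"
    by (metis V_add add_cancel_right_right)
  then show ?case by simp
next
  case (pCons a p)
  have "polyL (pcompose (pCons a p) [:-j, 1:]) (V y)
      = sc a (V y) + polyL [:-j, 1:] (V (polyL p y))"
    by (simp only: pcompose_pCons polyL_add polyL_const polyL_mult pCons.IH)
  also have "\<dots> = sc a (V y) + V (L (polyL p y))"
    by (simp add: polyL_pCons polyL_const LV scale_minus_left)
  also have "\<dots> = V (polyL (pCons a p) y)"
    by (simp add: polyL_pCons polyL_L V_add V_scale)
  finally show ?case .
qed

end

locale internal_direct_sum = vector_space sc for sc :: "complex \<Rightarrow> 'w::ab_group_add \<Rightarrow> 'w" +
  fixes A :: "'i \<Rightarrow> 'w set"
  assumes direct_sum: "direct_sum_decomp sc UNIV A"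
begin

lemma subspace_component: "subspace (A i)"
  using direct_sum unfolding direct_sum_decomp_def by simp

lemma decomposable_all: "decomposable A w"
  using direct_sum unfolding direct_sum_decomp_def decomposable_def by simp

lemma components_eq_0:
  "finite F \<Longrightarrow> \<forall>i\<in>F. f i \<in> A i \<Longrightarrow> (\<Sum>i\<in>F. f i) = 0 \<Longrightarrow> \<forall>i\<in>F. f i = 0"
  using direct_sum unfolding direct_sum_decomp_def by simp

lemma decomposition_unique:
  assumes F: "finite F" "\<forall>i\<in>F. f i \<in> A i" and G: "finite G" "\<forall>i\<in>G. g i \<in> A i"
    and eq: "(\<Sum>i\<in>F. f i) = (\<Sum>i\<in>G. g i)"
  shows "(if i \<in> F then f i else 0) = (if i \<in> G then g i else 0)"
proof -
  define d where "d i = (if i \<in> F then f i else 0) - (if i \<in> G then g i else 0)" for i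
  have "(\<Sum>i\<in>F \<union> G. d i) = 0"
    unfolding d_def sum_subtractf using eq sum_pad_union[OF F(1) G(1), of f]
      sum_pad_union[OF G(1) F(1), of g] by (simp add: Un_commute)
  moreover have "\<forall>i\<in>F \<union> G. d i \<in> A i"
    unfolding d_def using F(2) G(2) subspace_component
    by (auto intro: subspace_diff subspace_0 subspace_neg)
  ultimately have "\<forall>i\<in>F \<union> G. d i = 0"
    using components_eq_0 F(1) G(1) by blast
  then show ?thesis
    unfolding d_def by (cases "i \<in> F \<union> G") auto
qed

definition proj :: "'i \<Rightarrow> 'w \<Rightarrow> 'w" where
  "proj i w = (SOME x. \<exists>F f. finite F \<and> (\<forall>i\<in>F. f i \<in> A i) \<and> w = (\<Sum>i\<in>F. f i)
                 \<and> x = (if i \<in> F then f i else 0))"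

lemma proj_sum_components:
  assumes "finite F" "\<forall>i\<in>F. f i \<in> A i"
  shows "proj i (\<Sum>k\<in>F. f k) = (if i \<in> F then f i else 0)"
proof -
  let ?P = "\<lambda>x. \<exists>G g. finite G \<and> (\<forall>i\<in>G. g i \<in> A i) \<and> (\<Sum>k\<in>F. f k) = (\<Sum>i\<in>G. g i)
                 \<and> x = (if i \<in> G then g i else 0)"
  have "?P (if i \<in> F then f i else 0)"
    using assms by blast
  then have "?P (proj i (\<Sum>k\<in>F. f k))"
    unfolding proj_def by (rule someI)
  then obtain G g where "finite G" "\<forall>i\<in>G. g i \<in> A i" "(\<Sum>k\<in>F. f k) = (\<Sum>i\<in>G. g i)"
    and "proj i (\<Sum>k\<in>F. f k) = (if i \<in> G then g i else 0)"
    by blast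
  then show ?thesis
    using decomposition_unique[OF assms] by simp
qed

lemma proj_in: "proj i w \<in> A i"
proof -
  obtain F f where "finite F" "\<forall>i\<in>F. f i \<in> A i" "w = (\<Sum>i\<in>F. f i)"
    using decomposable_all[of w] unfolding decomposable_def by blast
  then show ?thesis
    using proj_sum_components subspace_0[OF subspace_component] by simp
qed

lemma proj_id: "x \<in> A i \<Longrightarrow> proj i x = x"
  using proj_sum_components[of "{i}" "\<lambda>_. x" i] by simp

lemma proj_other: "x \<in> A j \<Longrightarrow> i \<noteq> j \<Longrightarrow> proj i x = 0"
  using proj_sum_components[of "{j}" "\<lambda>_. x" i] by simp

lemma proj_add: "proj i (x + y) = proj i x + proj i y"
proof -
  obtain F f where F: "finite F" "\<forall>i\<in>F. f i \<in> A i" "x = (\<Sum>i\<in>F. f i)"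
    using decomposable_all[of x] unfolding decomposable_def by blast
  obtain G g where G: "finite G" "\<forall>i\<in>G. g i \<in> A i" "y = (\<Sum>i\<in>G. g i)"
    using decomposable_all[of y] unfolding decomposable_def by blast
  define f' where "f' i = (if i \<in> F then f i else 0)" for i
  define g' where "g' i = (if i \<in> G then g i else 0)" for i
  have fin: "finite (F \<union> G)"
    using F(1) G(1) by simp
  have x: "x = (\<Sum>i\<in>F \<union> G. f' i)" and y: "y = (\<Sum>i\<in>F \<union> G. g' i)"
    unfolding f'_def g'_def F(3) G(3)
    using sum_pad_union[OF F(1) G(1)] sum_pad_union[OF G(1) F(1)] by (simp_all add: Un_commute)
  have f': "f' i \<in> A i" and g': "g' i \<in> A i" for i
    unfolding f'_def g'_def using F(2) G(2) subspace_0[OF subspace_component] by auto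
  have "proj i (x + y) = (if i \<in> F \<union> G then f' i + g' i else 0)"
    unfolding x y sum.distrib[symmetric]
    by (intro proj_sum_components[OF fin] ballI subspace_add[OF subspace_component f' g'])
  moreover have "proj i x = (if i \<in> F \<union> G then f' i else 0)"
    unfolding x by (intro proj_sum_components[OF fin] ballI f')
  moreover have "proj i y = (if i \<in> F \<union> G then g' i else 0)"
    unfolding y by (intro proj_sum_components[OF fin] ballI g')
  ultimately show ?thesis
    by simp
qed

lemma proj_scale: "proj i (sc c x) = sc c (proj i x)"
proof -
  obtain F f where F: "finite F" "\<forall>i\<in>F. f i \<in> A i" "x = (\<Sum>i\<in>F. f i)"
    using decomposable_all[of x] unfolding decomposable_def by blast
  have "\<forall>i\<in>F. sc c (f i) \<in> A i"
    using F(2) subspace_scale[OF subspace_component] by blast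
  then show ?thesis
    unfolding F(3) scale_sum_right by (simp add: proj_sum_components[OF F(1)] F(2))
qed

lemma proj_zero [simp]: "proj i 0 = 0"
  by (metis add_cancel_right_right proj_add)

lemma proj_sum: "proj i (\<Sum>k\<in>K. x k) = (\<Sum>k\<in>K. proj i (x k))"
  by (induction K rule: infinite_finite_induct) (simp_all add: proj_add)

lemma proj_proj: "proj j (proj i w) = (if j = i then proj i w else 0)"
  using proj_id[OF proj_in] proj_other[OF proj_in] by simp

definition supp :: "'w \<Rightarrow> 'i set" where
  "supp w = {i. proj i w \<noteq> 0}"

lemma finite_supp: "finite (supp w)" and sum_proj_supp: "(\<Sum>i\<in>supp w. proj i w) = w"
proof -
  obtain F f where F: "finite F" "\<forall>i\<in>F. f i \<in> A i" "w = (\<Sum>i\<in>F. f i)"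
    using decomposable_all[of w] unfolding decomposable_def by blast
  have pr: "proj i w = (if i \<in> F then f i else 0)" for i
    unfolding F(3) by (rule proj_sum_components[OF F(1,2)])
  have "supp w \<subseteq> F"
    unfolding supp_def using pr by auto
  then show "finite (supp w)"
    using F(1) finite_subset by blast
  have "(\<Sum>i\<in>supp w. proj i w) = (\<Sum>i\<in>F. proj i w)"
    using \<open>supp w \<subseteq> F\<close> F(1) by (intro sum.mono_neutral_left) (auto simp: supp_def)
  then show "(\<Sum>i\<in>supp w. proj i w) = w"
    using F(3) pr by simp
qed

lemma eq_0_if_proj_eq_0: "(\<And>i. proj i w = 0) \<Longrightarrow> w = 0"
  using sum_proj_supp[of w] by (simp add: supp_def)

definition coarsening :: "('i \<Rightarrow> 'j) \<Rightarrow> 'j \<Rightarrow> 'w set" where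
  "coarsening f j = {w. \<forall>i. proj i w \<noteq> 0 \<longrightarrow> f i = j}"

lemma subspace_coarsening: "subspace (coarsening f j)"
  by (rule subspaceI) (auto simp: coarsening_def proj_add proj_scale, metis add.right_neutral)

lemma proj_coarsening_sum:
  assumes "finite S"
  shows "proj i (\<Sum>k\<in>{k\<in>S. f k = j}. proj k w) = (if i \<in> S \<and> f i = j then proj i w else 0)"
  using assms by (simp add: proj_sum proj_proj sum.delta)

lemma direct_sum_decomp_coarsening: "direct_sum_decomp sc UNIV (coarsening f)"
  unfolding direct_sum_decomp_def
proof (intro conjI allI impI ballI)
  show "subspace (coarsening f j)" for j
    by (rule subspace_coarsening)
next
  fix w
  let ?c = "\<lambda>j. \<Sum>k\<in>{k\<in>supp w. f k = j}. proj k w"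
  have "(\<Sum>k\<in>supp w. proj k w) = (\<Sum>j\<in>f ` supp w. ?c j)"
    by (rule sum.image_gen[OF finite_supp])
  then have "w = (\<Sum>j\<in>f ` supp w. ?c j)"
    by (simp only: sum_proj_supp)
  moreover have "?c j \<in> coarsening f j" for j
    unfolding coarsening_def by (simp add: proj_coarsening_sum[OF finite_supp])
  ultimately show "\<exists>F c. finite F \<and> F \<subseteq> UNIV \<and> (\<forall>j\<in>F. c j \<in> coarsening f j) \<and> w = sum c F"
    using finite_supp[of w] by (intro exI[of _ "f ` supp w"] exI[of _ ?c]) simp
next
  fix F c j
  assume F: "finite F \<and> F \<subseteq> UNIV \<and> (\<forall>j\<in>F. c j \<in> coarsening f j) \<and> sum c F = 0" and "j \<in> F"
  have "proj i (c j) = 0" for i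
  proof (cases "f i = j")
    case False
    then show ?thesis
      using F \<open>j \<in> F\<close> unfolding coarsening_def by blast
  next
    case True
    have "0 = proj i (sum c F)"
      using F by simp
    also have "\<dots> = (\<Sum>j'\<in>F. proj i (c j'))"
      by (rule proj_sum)
    also have "\<dots> = proj i (c j)"
    proof (rule sum_eq_single)
      fix j' assume "j' \<in> F" "j' \<noteq> j"
      then show "proj i (c j') = 0"
        using F True unfolding coarsening_def by blast
    qed (use F \<open>j \<in> F\<close> in auto)
    finally show ?thesis ..
  qed
  then show "c j = 0"
    by (rule eq_0_if_proj_eq_0)
qed

end

lemma neg_one_power_mult_gchoose_minus_two:
  "(-1) ^ i * ((of_int (-2) :: complex) gchoose i) = of_nat i + 1"
proof -
  have "((of_int (-2) :: complex) gchoose i) = (-1) ^ i * (of_nat (Suc i) gchoose i)"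
    by (simp add: gbinomial_negated_upper[of "-2"])
  also have "(of_nat (Suc i) :: complex) gchoose i = of_nat (Suc i)"
    by (metis binomial_gbinomial binomial_Suc_n)
  finally show ?thesis
    by (simp flip: power_mult_distrib)
qed

lemma one_gchoose: "((1 :: complex) gchoose i) = (if i \<le> 1 then 1 else 0)"
proof -
  have "((1 :: complex) gchoose i) = of_nat (1 choose i)"
    by (metis binomial_gbinomial of_nat_1)
  also have "\<dots> = (if i \<le> 1 then 1 else 0)"
    by (cases i) auto
  finally show ?thesis .
qed

locale weak_module =
  fixes sc :: "complex \<Rightarrow> 'v::ab_group_add \<Rightarrow> 'v" and Y :: "'v \<Rightarrow> int \<Rightarrow> 'v \<Rightarrow> 'v" and vac :: 'v
    and scW :: "complex \<Rightarrow> 'w::ab_group_add \<Rightarrow> 'w" and YW :: "'v \<Rightarrow> int \<Rightarrow> 'w \<Rightarrow> 'w"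
  assumes weak_module: "is_weak_module sc Y vac scW YW"
begin

sublocale W: vector_space scW
  using weak_module unfolding is_weak_module_def by blast

lemma YW_linear: "Vector_Spaces.linear scW scW (YW u n)"
  and YW_linear_left: "Vector_Spaces.linear sc scW (\<lambda>u. YW u n w)"
  using weak_module unfolding is_weak_module_def modes_bilinear_def by blast+

lemma YW_add: "YW u n (x + y) = YW u n x + YW u n y"
  using YW_linear unfolding Vector_Spaces.linear_iff by blast

lemma YW_scale: "YW u n (scW c x) = scW c (YW u n x)"
  using YW_linear unfolding Vector_Spaces.linear_iff by blast

lemma YW_zero [simp]: "YW u n 0 = 0"
  by (metis YW_add add_cancel_right_right)

lemma YW_diff: "YW u n (x - y) = YW u n x - YW u n y"
  by (metis YW_add diff_add_cancel eq_diff_eq)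

lemma YW_sum: "YW v n (\<Sum>i\<in>S. f i) = (\<Sum>i\<in>S. YW v n (f i))"
  by (induction S rule: infinite_finite_induct) (simp_all add: YW_add)

lemma YW_add_left: "YW (u + v) n w = YW u n w + YW v n w"
  using YW_linear_left unfolding Vector_Spaces.linear_iff by blast

lemma YW_scale_left: "YW (sc c u) n w = scW c (YW u n w)"
  using YW_linear_left unfolding Vector_Spaces.linear_iff by blast

lemma YW_zero_left [simp]: "YW 0 n w = 0"
  by (metis YW_add_left add_cancel_right_right)

lemma YW_vac: "YW vac n w = (if n = -1 then w else 0)"
  using weak_module unfolding is_weak_module_def by blast

lemma jacobi: "\<exists>N. \<forall>K\<ge>N.
    (\<Sum>i<K. scW ((of_int m :: complex) gchoose i) (YW (Y u (r + int i) v) (m + n - int i) w))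
  = (\<Sum>i<K. scW ((-1) ^ i * ((of_int r :: complex) gchoose i))
        (YW u (m + r - int i) (YW v (n + int i) w)
         - scW ((-1) powi r) (YW v (n + r - int i) (YW u (m + int i) w))))"
  using weak_module unfolding is_weak_module_def jacobi_identity_def by blast

text \<open>The Jacobi identity at \<open>m = 1\<close>, \<open>r = 0\<close>.\<close>
lemma commutator_formula:
  "YW u 1 (YW v n w) - YW v n (YW u 1 w) = YW (Y u 0 v) (1 + n) w + YW (Y u 1 v) n w"
proof -
  obtain N where N: "\<forall>K\<ge>N.
      (\<Sum>i<K. scW ((of_int 1 :: complex) gchoose i) (YW (Y u (0 + int i) v) (1 + n - int i) w))
    = (\<Sum>i<K. scW ((-1) ^ i * ((of_int 0 :: complex) gchoose i))
        (YW u (1 + 0 - int i) (YW v (n + int i) w)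
         - scW ((-1) powi 0) (YW v (n + 0 - int i) (YW u (1 + int i) w))))"
    using jacobi[of 1 u 0 v n w] by blast
  define K where "K = max N 2"
  have "YW (Y u 0 v) (1 + n) w + YW (Y u 1 v) n w
      = (\<Sum>i<2. scW ((of_int 1 :: complex) gchoose i) (YW (Y u (0 + int i) v) (1 + n - int i) w))"
    by (simp add: numeral_2_eq_2 one_gchoose)
  also have "\<dots> = (\<Sum>i<K. scW ((of_int 1 :: complex) gchoose i) (YW (Y u (0 + int i) v) (1 + n - int i) w))"
    unfolding K_def by (intro sum.mono_neutral_left) (auto simp: one_gchoose)
  also have "\<dots> = (\<Sum>i<K. scW ((-1) ^ i * ((of_int 0 :: complex) gchoose i))
        (YW u (1 + 0 - int i) (YW v (n + int i) w)
         - scW ((-1) powi 0) (YW v (n + 0 - int i) (YW u (1 + int i) w))))"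
    using N K_def by simp
  also have "\<dots> = YW u 1 (YW v n w) - YW v n (YW u 1 w)"
    unfolding K_def by (subst sum_eq_single[of _ 0]) (auto simp: gbinomial_0_left)
  finally show ?thesis ..
qed

text \<open>The Jacobi identity at \<open>m = 0\<close>, \<open>r = -2\<close>, \<open>v = 1\<close>: the modes of \<open>u\<^sub>-\<^sub>2 1 = L(-1) u\<close> are
  those of the derivative of \<open>Y(u, x)\<close>.\<close>
lemma derivative_modes: "YW (Y u (-2) vac) n w = scW (- of_int n) (YW u (n - 1) w)"
proof -
  define g where "g i = scW (of_nat i + 1) ((if n + int i = -1 then YW u (-2 - int i) w else 0)
                 - (if n - 2 - int i = -1 then YW u (int i) w else 0))" for i
  have g: "g i = scW ((-1) ^ i * ((of_int (-2) :: complex) gchoose i))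
      (YW u (0 + -2 - int i) (YW vac (n + int i) w)
       - scW ((-1) powi (-2)) (YW vac (n + -2 - int i) (YW u (0 + int i) w)))" for i
    unfolding g_def neg_one_power_mult_gchoose_minus_two by (simp add: YW_vac power_int_minus)
  obtain N where N: "\<forall>K\<ge>N.
      (\<Sum>i<K. scW ((of_int 0 :: complex) gchoose i) (YW (Y u (-2 + int i) vac) (0 + n - int i) w))
    = (\<Sum>i<K. g i)"
    unfolding g using jacobi[of 0 u "-2" vac n w] by blast
  define K where "K = max N (nat \<bar>n\<bar> + 2)"
  have "YW (Y u (-2) vac) n w
      = (\<Sum>i<K. scW ((of_int 0 :: complex) gchoose i) (YW (Y u (-2 + int i) vac) (0 + n - int i) w))"
    unfolding K_def by (subst sum_eq_single[of _ 0]) (auto simp: gbinomial_0_left)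
  also have "\<dots> = (\<Sum>i<K. g i)"
    using N K_def by simp
  also have "\<dots> = scW (- of_int n) (YW u (n - 1) w)"
  proof (cases "n \<le> -1")
    case True
    then have "(\<Sum>i<K. g i) = g (nat (-1 - n))"
      unfolding K_def by (intro sum_eq_single) (auto simp: g_def)
    then show ?thesis
      using True by (simp add: g_def of_nat_nat)
  next
    case False
    show ?thesis
    proof (cases "n = 0")
      case True
      then show ?thesis by (simp add: g_def)
    next
      case False
      with \<open>\<not> n \<le> -1\<close> have "(\<Sum>i<K. g i) = g (nat (n - 1))"
        unfolding K_def by (intro sum_eq_single) (auto simp: g_def)
      then show ?thesis
        using \<open>\<not> n \<le> -1\<close> False by (simp add: g_def of_nat_nat W.scale_minus_left)
    qed
  qed
  finally show ?thesis .
qed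

end

locale voa_module = weak_module sc Y vac scW YW
  for sc :: "complex \<Rightarrow> 'v::ab_group_add \<Rightarrow> 'v" and Y vac
    and scW :: "complex \<Rightarrow> 'w::ab_group_add \<Rightarrow> 'w" and YW +
  fixes Vg :: "int \<Rightarrow> 'v set" and \<omega> :: 'v and c :: complex
  assumes VOA: "is_VOA sc Vg Y vac \<omega> c"
begin

sublocale V: vector_space sc
  using VOA unfolding is_VOA_def by blast

lemma fin_dim_Vg: "fin_dim sc (Vg n)"
  and omega_in_Vg: "\<omega> \<in> Vg 2"
  and L0_on_Vg: "v \<in> Vg n \<Longrightarrow> Y \<omega> 1 v = sc (of_int n) v"
  and modes_omega_0: "Y (Y \<omega> 0 u) n = (\<lambda>w. sc (- of_int n) (Y u (n - 1) w))"
  and creation: "Y v (-1) vac = v"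
  using VOA unfolding is_VOA_def by blast+

lemma omega_0_eq: "Y \<omega> 0 u = Y u (-2) vac"
  using creation[of "Y \<omega> 0 u"] modes_omega_0[of u "-1"] by simp

lemma L0_commutator:
  assumes "v \<in> Vg k"
  shows "YW \<omega> 1 (YW v n x) = YW v n (YW \<omega> 1 x) + scW (of_int (k - n - 1)) (YW v n x)"
proof -
  have "YW \<omega> 1 (YW v n x) - YW v n (YW \<omega> 1 x) = YW (Y \<omega> 0 v) (1 + n) x + YW (Y \<omega> 1 v) n x"
    by (rule commutator_formula)
  also have "\<dots> = scW (- of_int (1 + n)) (YW v n x) + scW (of_int k) (YW v n x)"
    unfolding omega_0_eq derivative_modes L0_on_Vg[OF assms] YW_scale_left by simp
  also have "\<dots> = scW (of_int (k - n - 1)) (YW v n x)"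
    by (simp flip: W.scale_left_distrib)
  finally show ?thesis
    by (simp add: algebra_simps)
qed

sublocale L0: linear_endo scW "YW \<omega> 1"
  by unfold_locales (simp_all add: YW_add YW_scale)

lemma gen_eigenspace_eq: "gen_eigenspace scW YW \<omega> h = L0.gen_eig h"
  unfolding gen_eigenspace_def L0.gen_eig_def by simp

lemma L0_shifted_power_mode:
  assumes "v \<in> Vg k"
  shows "((\<lambda>x. YW \<omega> 1 x - scW (h + of_int (k - n - 1)) x) ^^ t) (YW v n y)
       = YW v n (((\<lambda>x. YW \<omega> 1 x - scW h x) ^^ t) y)"
proof (induction t)
  case 0
  then show ?case by simp
next
  case (Suc t)
  define z where "z = ((\<lambda>x. YW \<omega> 1 x - scW h x) ^^ t) y"
  have "YW \<omega> 1 (YW v n z) - scW (h + of_int (k - n - 1)) (YW v n z)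
      = YW v n (YW \<omega> 1 z - scW h z)"
    unfolding L0_commutator[OF assms] by (simp add: W.scale_left_distrib YW_diff YW_scale)
  then show ?case
    using Suc unfolding z_def by simp
qed

lemma gen_eig_mode:
  assumes "v \<in> Vg k" "y \<in> L0.gen_eig h"
  shows "YW v n y \<in> L0.gen_eig (h + of_int (k - n - 1))"
proof -
  obtain t where t: "((\<lambda>x. YW \<omega> 1 x - scW h x) ^^ t) y = 0"
    using assms(2) unfolding L0.gen_eig_def by blast
  have "((\<lambda>x. YW \<omega> 1 x - scW (h + of_int (k - n - 1)) x) ^^ t) (YW v n y) = 0"
    unfolding L0_shifted_power_mode[OF assms(1)] t by simp
  then show ?thesis
    unfolding L0.gen_eig_def by blast
qed

end

locale grading_restricted_voa_module = voa_module +
  assumes grading_restricted: "grading_restricted_generalized_module scW YW \<omega>"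
begin

sublocale G: internal_direct_sum scW L0.gen_eig
  using grading_restricted
  unfolding grading_restricted_generalized_module_def generalized_module_def gen_eigenspace_eq
  by unfold_locales blast

definition depth :: "complex \<Rightarrow> nat" where
  "depth h = (GREATEST d. L0.gen_eig (h - of_nat d) \<noteq> {0})"

lemma depth_bounded:
  "\<exists>M. \<forall>d. L0.gen_eig (h - of_nat d) \<noteq> {0} \<longrightarrow> d \<le> M"
proof -
  obtain N where N: "\<And>n::int. n \<le> N \<Longrightarrow> L0.gen_eig (h + of_int n) = {0}"
    using grading_restricted
    unfolding grading_restricted_generalized_module_def gen_eigenspace_eq by blast
  have "d \<le> nat (- N)" if "L0.gen_eig (h - of_nat d) \<noteq> {0}" for d
  proof (rule ccontr)
    assume "\<not> d \<le> nat (- N)"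
    then have "- int d \<le> N"
      by linarith
    then have "L0.gen_eig (h + of_int (- int d)) = {0}"
      by (rule N)
    then show False
      using that by simp
  qed
  then show ?thesis by blast
qed

lemma
  assumes "L0.gen_eig h \<noteq> {0}"
  shows gen_eig_depth: "L0.gen_eig (h - of_nat (depth h)) \<noteq> {0}"
    and le_depth: "L0.gen_eig (h - of_nat d) \<noteq> {0} \<Longrightarrow> d \<le> depth h"
proof -
  obtain M where M: "\<forall>d. L0.gen_eig (h - of_nat d) \<noteq> {0} \<longrightarrow> d \<le> M"
    using depth_bounded by blast
  have "L0.gen_eig (h - of_nat 0) \<noteq> {0}"
    using assms by simp
  then show "L0.gen_eig (h - of_nat (depth h)) \<noteq> {0}"
    unfolding depth_def by (rule GreatestI_nat) (use M in blast)
  show "L0.gen_eig (h - of_nat d) \<noteq> {0} \<Longrightarrow> d \<le> depth h"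
    unfolding depth_def by (rule Greatest_le_nat) (use M in blast)+
qed

lemma depth_add_int_ge:
  assumes "L0.gen_eig h \<noteq> {0}" "L0.gen_eig (h + of_int j) \<noteq> {0}"
  shows "int (depth (h + of_int j)) \<ge> int (depth h) + j"
proof -
  have "- j \<le> int (depth h)"
    using le_depth[OF assms(1), of "nat (- j)"] assms(2) by (cases "j \<ge> 0") simp_all
  then have "h + of_int j - of_nat (nat (int (depth h) + j)) = h - of_nat (depth h)"
    by (simp add: of_nat_nat)
  then have "nat (int (depth h) + j) \<le> depth (h + of_int j)"
    using le_depth[OF assms(2)] gen_eig_depth[OF assms(1)] by metis
  then show ?thesis
    by linarith
qed

lemma depth_add_int:
  assumes "L0.gen_eig h \<noteq> {0}" "L0.gen_eig (h + of_int j) \<noteq> {0}"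
  shows "int (depth (h + of_int j)) = int (depth h) + j"
  using depth_add_int_ge[OF assms] depth_add_int_ge[OF assms(2), of "- j"] assms(1) by simp

lemma depth_of_mode_component:
  assumes "v \<in> Vg k" "w \<in> G.coarsening depth n" "G.proj h' (YW v m w) \<noteq> 0"
  shows "int (depth h') = int n + (k - m - 1)"
proof -
  have "G.proj h' (YW v m w) = (\<Sum>h\<in>G.supp w. G.proj h' (YW v m (G.proj h w)))"
    by (subst G.sum_proj_supp[of w, symmetric]) (simp add: YW_sum G.proj_sum)
  then obtain h where h: "h \<in> G.supp w" "G.proj h' (YW v m (G.proj h w)) \<noteq> 0"
    using assms(3) by (metis (mono_tags, lifting) sum.neutral)
  define y where "y = YW v m (G.proj h w)"
  have y: "y \<in> L0.gen_eig (h + of_int (k - m - 1))"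
    unfolding y_def by (rule gen_eig_mode[OF assms(1) G.proj_in])
  have h': "h' = h + of_int (k - m - 1)"
  proof (rule ccontr)
    assume "h' \<noteq> h + of_int (k - m - 1)"
    then have "G.proj h' y = 0"
      using G.proj_other[OF y] by blast
    then show False
      using h(2) unfolding y_def by simp
  qed
  have "y \<noteq> 0"
    using h(2) unfolding y_def by auto
  then have shifted: "L0.gen_eig (h + of_int (k - m - 1)) \<noteq> {0}"
    using y by blast
  have "G.proj h w \<noteq> 0"
    using h(1) unfolding G.supp_def by simp
  then have "L0.gen_eig h \<noteq> {0}" and "depth h = n"
    using G.proj_in[of h w] assms(2) unfolding G.coarsening_def by blast+
  then show ?thesis
    using depth_add_int[OF _ shifted] h' by simp
qed

lemma mode_coarsening_depth:
  assumes "v \<in> Vg k" "w \<in> G.coarsening depth n"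
  shows "if k + int n - m - 1 \<ge> 0 then YW v m w \<in> G.coarsening depth (nat (k + int n - m - 1))
         else YW v m w = 0"
proof (cases "k + int n - m - 1 \<ge> 0")
  case True
  have "depth h' = nat (k + int n - m - 1)" if "G.proj h' (YW v m w) \<noteq> 0" for h'
    using depth_of_mode_component[OF assms that] by simp
  then show ?thesis
    using True unfolding G.coarsening_def by simp
next
  case False
  have "G.proj h' (YW v m w) = 0" for h'
    using depth_of_mode_component[OF assms, of h'] False by force
  then show ?thesis
    using False G.eq_0_if_proj_eq_0 by simp
qed

lemma N_gradable: "N_gradable Vg scW YW"
  unfolding N_gradable_def
  by (intro exI[of _ "G.coarsening depth"] conjI allI impI G.direct_sum_decomp_coarsening
      mode_coarsening_depth)

end

lemma fin_dim_if_subset_span: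
  fixes sc :: "complex \<Rightarrow> 'w::ab_group_add \<Rightarrow> 'w"
  assumes "vector_space sc" "module.subspace sc S" "finite B" "S \<subseteq> module.span sc B"
  shows "fin_dim sc S"
proof -
  interpret vector_space sc by fact
  obtain B' where B': "B' \<subseteq> S" "independent B'" "S \<subseteq> span B'"
    using maximal_independent_subset[of S] by blast
  have "finite B'"
    using independent_span_bound[OF assms(3) B'(2)] B'(1) assms(4) by blast
  moreover have "span B' = S"
    using B' assms(2) span_minimal by blast
  ultimately show ?thesis
    unfolding fin_dim_def using B'(1) by blast
qed

locale cofinite_graded_voa_module = voa_module sc Y vac scW YW Vg \<omega> c
  for sc Y vac and scW :: "complex \<Rightarrow> 'w::ab_group_add \<Rightarrow> 'w" and YW Vg \<omega> c +
  fixes Wn :: "nat \<Rightarrow> 'w set" and F :: "'w set"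
  assumes direct_sum_Wn: "direct_sum_decomp scW UNIV Wn"
    and mode_Wn: "\<And>k m n v w. v \<in> Vg k \<Longrightarrow> w \<in> Wn n \<Longrightarrow>
      (if k + int n - m - 1 \<ge> 0 then YW v m w \<in> Wn (nat (k + int n - m - 1)) else YW v m w = 0)"
    and finite_F: "finite F"
    and span_F_C1: "W.span (F \<union> C1 sc Vg scW YW) = UNIV"
begin

sublocale P: internal_direct_sum scW Wn
  by unfold_locales (rule direct_sum_Wn)

lemma YW_mem_span:
  assumes "x \<in> V.span X" "y \<in> W.span Z"
  shows "YW x m y \<in> W.span ((\<lambda>(a, b). YW a m b) ` (X \<times> Z))"
  using assms(1)
proof (induction x rule: V.span_induct_alt)
  case base
  then show ?case by (simp add: W.span_zero)
next
  case (step c a x)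
  have "YW a m y \<in> W.span ((\<lambda>(a, b). YW a m b) ` (X \<times> Z))"
    using assms(2)
  proof (induction y rule: W.span_induct_alt)
    case base
    then show ?case by (simp add: W.span_zero)
  next
    case (step d z y)
    have "YW a m z \<in> (\<lambda>(a, b). YW a m b) ` (X \<times> Z)"
      using \<open>a \<in> X\<close> step(1) by force
    then show ?case
      using step(2) by (simp add: YW_add YW_scale W.span_add W.span_scale W.span_base)
  qed
  then show ?case
    using step(2) by (simp add: YW_add_left YW_scale_left W.span_add W.span_scale)
qed

lemma L0_Wn: "w \<in> Wn n \<Longrightarrow> YW \<omega> 1 w \<in> Wn n"
  using mode_Wn[OF omega_in_Vg, of w n 1] by simp

lemma mode_minus_one_Wn: "v \<in> Vg (int k) \<Longrightarrow> w \<in> Wn n \<Longrightarrow> YW v (-1) w \<in> Wn (n + k)"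
  using mode_Wn[of v "int k" w n "-1"] by (simp add: add.commute flip: of_nat_add)

lemma proj_homogeneous:
  assumes T_add: "\<And>x y. T (x + y) = T x + T y" and T_deg: "\<And>i x. x \<in> Wn i \<Longrightarrow> T x \<in> Wn (i + d)"
  shows "P.proj n (T w) = (if d \<le> n then T (P.proj (n - d) w) else 0)"
proof -
  have T_zero: "T 0 = 0"
    by (metis T_add add_cancel_right_right)
  have T_sum: "T (\<Sum>i\<in>S. f i) = (\<Sum>i\<in>S. T (f i))" for S :: "nat set" and f
    by (induction S rule: infinite_finite_induct) (simp_all add: T_add T_zero)
  have "T w = (\<Sum>i\<in>P.supp w. T (P.proj i w))"
    by (subst P.sum_proj_supp[of w, symmetric]) (rule T_sum)
  also have "\<dots> = (\<Sum>j\<in>(\<lambda>i. i + d) ` P.supp w. T (P.proj (j - d) w))"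
    by (simp add: sum.reindex)
  finally have "P.proj n (T w) = (if n \<in> (\<lambda>i. i + d) ` P.supp w then T (P.proj (n - d) w) else 0)"
    using P.finite_supp T_deg P.proj_in by (simp add: P.proj_sum_components)
  moreover have "P.proj (n - d) w = 0" if "d \<le> n" "n \<notin> (\<lambda>i. i + d) ` P.supp w"
    using that unfolding P.supp_def by (metis (mono_tags, lifting) image_eqI le_add_diff_inverse2 mem_Collect_eq)
  ultimately show ?thesis
    using T_zero by auto
qed

lemma proj_L0: "P.proj n (YW \<omega> 1 w) = YW \<omega> 1 (P.proj n w)"
  using proj_homogeneous[of "YW \<omega> 1" 0] by (simp add: YW_add L0_Wn)

lemma proj_polyL: "P.proj n (L0.polyL p w) = L0.polyL p (P.proj n w)"
  by (induction p arbitrary: w rule: pCons_induct)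
    (simp_all add: L0.polyL_pCons P.proj_add P.proj_scale proj_L0)

lemma proj_mode_minus_one:
  "v \<in> Vg (int k) \<Longrightarrow> P.proj n (YW v (-1) w) = (if k \<le> n then YW v (-1) (P.proj (n - k) w) else 0)"
  by (rule proj_homogeneous) (simp_all add: YW_add mode_minus_one_Wn)

definition generators :: "nat \<Rightarrow> 'w set" where
  "generators n = P.proj n ` F \<union>
     {YW b (-1) y | b y k. 1 \<le> k \<and> k \<le> n \<and> b \<in> Vg (int k) \<and> y \<in> Wn (n - k)}"

text \<open>Projecting \<open>W = span F + C\<^sub>1(W)\<close> to degree \<open>n\<close>.\<close>
lemma Wn_subset_span_generators: "Wn n \<subseteq> W.span (generators n)"
proof
  fix w assume w: "w \<in> Wn n"
  let ?G = "{YW v (-1) w | v w. v \<in> V.span (\<Union>k\<in>{1..}. Vg k)}"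
  have "F \<union> W.span ?G \<subseteq> W.span (F \<union> ?G)"
    using W.span_superset[of "F \<union> ?G"] W.span_mono[of ?G "F \<union> ?G"] by blast
  then have "W.span (F \<union> C1 sc Vg scW YW) \<subseteq> W.span (F \<union> ?G)"
    unfolding C1_def by (simp add: W.span_minimal)
  then have ws: "w \<in> W.span (F \<union> ?G)"
    using span_F_C1 by blast
  have mode: "P.proj n (YW v (-1) w') \<in> W.span (generators n)"
    if "v \<in> V.span (\<Union>k\<in>{1..}. Vg k)" for v w'
    using that
  proof (induction v arbitrary: w' rule: V.span_induct_alt)
    case base
    then show ?case by (simp add: W.span_zero)
  next
    case (step c b v)
    obtain j where "j \<ge> 1" "b \<in> Vg j"
      using step(1) by auto
    define k where "k = nat j"
    have k: "k \<ge> 1" "b \<in> Vg (int k)"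
      using \<open>j \<ge> 1\<close> \<open>b \<in> Vg j\<close> unfolding k_def by simp_all
    have "P.proj n (YW b (-1) w') \<in> W.span (generators n)"
    proof (cases "k \<le> n")
      case True
      then have "YW b (-1) (P.proj (n - k) w') \<in> generators n"
        unfolding generators_def using k P.proj_in by blast
      then show ?thesis
        using proj_mode_minus_one[OF k(2)] True by (simp add: W.span_base)
    qed (simp add: proj_mode_minus_one[OF k(2)] W.span_zero)
    then show ?case
      using step(2) by (simp add: YW_add_left YW_scale_left P.proj_add P.proj_scale W.span_add W.span_scale)
  qed
  have gen: "P.proj n x \<in> W.span (generators n)" if "x \<in> F \<union> ?G" for x
    using that mode by (auto simp: generators_def W.span_base)
  have "P.proj n w \<in> W.span (generators n)"
    using ws
  proof (induction w rule: W.span_induct_alt)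
    case base
    then show ?case by (simp add: W.span_zero)
  next
    case (step c x y)
    then show ?case
      using gen by (simp add: P.proj_add P.proj_scale W.span_add W.span_scale)
  qed
  then show "w \<in> W.span (generators n)"
    using P.proj_id[OF w] by simp
qed

lemma Wn_finitely_spanned: "\<exists>B. finite B \<and> Wn n \<subseteq> W.span B"
proof (induction n rule: less_induct)
  case (less n)
  obtain Bs where Bs: "\<And>m. m < n \<Longrightarrow> finite (Bs m) \<and> Wn m \<subseteq> W.span (Bs m)"
    using less by metis
  obtain BV where BV: "\<And>k. finite (BV k) \<and> V.span (BV k) = Vg k"
    using fin_dim_Vg unfolding fin_dim_def by metis
  define B where "B = P.proj n ` F \<union>
      (\<Union>k\<in>{1..n}. (\<lambda>(a, b). YW a (-1) b) ` (BV (int k) \<times> Bs (n - k)))"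
  have "finite B"
    unfolding B_def using finite_F BV Bs by (intro finite_UnI finite_imageI finite_UN_I) simp_all
  moreover have "generators n \<subseteq> W.span B"
  proof
    fix x assume "x \<in> generators n"
    then consider "x \<in> P.proj n ` F"
      | b y k where "x = YW b (-1) y" "1 \<le> k" "k \<le> n" "b \<in> Vg (int k)" "y \<in> Wn (n - k)"
      unfolding generators_def by blast
    then show "x \<in> W.span B"
    proof cases
      case 1
      then show ?thesis
        unfolding B_def by (intro W.span_base UnI1)
    next
      case (2 b y k)
      then have "x \<in> W.span ((\<lambda>(a, b). YW a (-1) b) ` (BV (int k) \<times> Bs (n - k)))"
        using YW_mem_span[of b "BV (int k)" y "Bs (n - k)" "-1"] BV Bs[of "n - k"] by auto
      moreover have "(\<lambda>(a, b). YW a (-1) b) ` (BV (int k) \<times> Bs (n - k)) \<subseteq> B"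
        unfolding B_def using 2 by auto
      ultimately show ?thesis
        using W.span_mono by blast
    qed
  qed
  then have "Wn n \<subseteq> W.span B"
    using Wn_subset_span_generators[of n] W.span_minimal[OF _ W.subspace_span] by blast
  with \<open>finite B\<close> show ?case
    by blast
qed

lemma L0_power_Wn: "w \<in> Wn n \<Longrightarrow> (YW \<omega> 1 ^^ j) w \<in> Wn n"
  by (induction j) (simp_all add: L0_Wn)

lemma exists_annihilating_poly_Wn:
  assumes "w \<in> Wn n"
  shows "\<exists>p. p \<noteq> 0 \<and> L0.polyL p w = 0"
proof -
  obtain B where "finite B" "Wn n \<subseteq> W.span B"
    using Wn_finitely_spanned by blast
  then show ?thesis
    using L0_power_Wn[OF assms] by (intro L0.exists_annihilating_poly) blast+
qed

definition ann_poly :: "'w \<Rightarrow> nat \<Rightarrow> complex poly" where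
  "ann_poly f d = (SOME p. p \<noteq> 0 \<and> L0.polyL p (P.proj d f) = 0)"

lemma ann_poly: "ann_poly f d \<noteq> 0" "L0.polyL (ann_poly f d) (P.proj d f) = 0"
  using someI_ex[OF exists_annihilating_poly_Wn[OF P.proj_in]] unfolding ann_poly_def by simp_all

text \<open>A base root \<open>(r, d)\<close> is a root of the chosen annihilator of the component \<open>\<pi>\<^sub>d f\<close> of some
  \<open>f \<in> F\<close>; raising the degree from \<open>d\<close> to \<open>n\<close> by modes \<open>b\<^sub>-\<^sub>1\<close> shifts it by \<open>n - d\<close>.\<close>
definition base_roots :: "(complex \<times> nat) set" where
  "base_roots = {(r, d). \<exists>f\<in>F. d \<in> P.supp f \<and> poly (ann_poly f d) r = 0}"

definition admissible :: "nat \<Rightarrow> complex set" where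
  "admissible n = (\<lambda>(r, d). r + of_nat n - of_nat d) ` base_roots"

definition annihilated_in :: "nat \<Rightarrow> 'w \<Rightarrow> bool" where
  "annihilated_in n w \<longleftrightarrow> (\<exists>p. p \<noteq> 0 \<and> L0.polyL p w = 0 \<and> {z. poly p z = 0} \<subseteq> admissible n)"

lemma finite_base_roots: "finite base_roots"
proof -
  have "base_roots \<subseteq> (\<Union>x\<in>Sigma F P.supp. {r. poly (ann_poly (fst x) (snd x)) r = 0} \<times> {snd x})"
    unfolding base_roots_def by force
  moreover have "finite (\<Union>x\<in>Sigma F P.supp. {r. poly (ann_poly (fst x) (snd x)) r = 0} \<times> {snd x})"
    using finite_F P.finite_supp poly_roots_finite[OF ann_poly(1)] by (intro finite_UN_I) simp_all
  ultimately show ?thesis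
    by (rule finite_subset)
qed

lemma annihilated_in_zero: "annihilated_in n 0"
  unfolding annihilated_in_def by (intro exI[of _ 1]) simp

lemma annihilated_in_add:
  assumes "annihilated_in n x" "annihilated_in n y"
  shows "annihilated_in n (scW a x + y)"
proof -
  obtain p where p: "p \<noteq> 0" "L0.polyL p x = 0" "{z. poly p z = 0} \<subseteq> admissible n"
    using assms(1) unfolding annihilated_in_def by blast
  obtain q where q: "q \<noteq> 0" "L0.polyL q y = 0" "{z. poly q z = 0} \<subseteq> admissible n"
    using assms(2) unfolding annihilated_in_def by blast
  have "L0.polyL (q * p) (scW a x + y) = 0"
    by (simp add: L0.polyL_mult L0.polyL_add_right L0.polyL_scale_right p(2) q(2)
        L0.polyL_commute[of q p])
  moreover have "{z. poly (q * p) z = 0} \<subseteq> admissible n"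
    using p(3) q(3) by auto
  ultimately show ?thesis
    unfolding annihilated_in_def using p(1) q(1) by (intro exI[of _ "q * p"]) simp
qed

lemma annihilated_in_span:
  assumes "\<And>g. g \<in> X \<Longrightarrow> annihilated_in n g" "w \<in> W.span X"
  shows "annihilated_in n w"
  using assms(2)
  by (induction w rule: W.span_induct_alt) (simp_all add: annihilated_in_zero annihilated_in_add assms(1))

lemma annihilated_in_proj_F:
  assumes "f \<in> F"
  shows "annihilated_in n (P.proj n f)"
proof (cases "n \<in> P.supp f")
  case True
  then have "{z. poly (ann_poly f n) z = 0} \<subseteq> admissible n"
    unfolding admissible_def base_roots_def using assms by force
  then show ?thesis
    unfolding annihilated_in_def using ann_poly by blast
next
  case False
  then show ?thesis
    by (simp add: P.supp_def annihilated_in_zero)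
qed

text \<open>Since \<open>[L(0), b\<^sub>-\<^sub>1] = k b\<^sub>-\<^sub>1\<close>, the polynomial \<open>p(x - k)\<close> kills \<open>b\<^sub>-\<^sub>1 y\<close> when \<open>p\<close> kills \<open>y\<close>.\<close>
lemma annihilated_in_mode:
  assumes "b \<in> Vg (int k)" "annihilated_in n y"
  shows "annihilated_in (n + k) (YW b (-1) y)"
proof -
  obtain p where p: "p \<noteq> 0" "L0.polyL p y = 0" "{z. poly p z = 0} \<subseteq> admissible n"
    using assms(2) unfolding annihilated_in_def by blast
  define q where "q = pcompose p [:- of_nat k, 1:]"
  have "L0.polyL q (YW b (-1) y) = YW b (-1) (L0.polyL p y)"
    unfolding q_def
    by (rule L0.polyL_pcompose_shift) (simp_all add: YW_add YW_scale L0_commutator[OF assms(1)])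
  then have "L0.polyL q (YW b (-1) y) = 0"
    using p(2) by simp
  moreover have "q \<noteq> 0"
    unfolding q_def using p(1) pcompose_eq_0[of p "[:- of_nat k, 1:]"] by auto
  moreover have "{z. poly q z = 0} \<subseteq> admissible (n + k)"
  proof
    fix z assume "z \<in> {z. poly q z = 0}"
    then have "z - of_nat k \<in> admissible n"
      using p(3) unfolding q_def by (auto simp: poly_pcompose)
    then show "z \<in> admissible (n + k)"
      unfolding admissible_def by (force simp: algebra_simps)
  qed
  ultimately show ?thesis
    unfolding annihilated_in_def by blast
qed

lemma annihilated_in_Wn: "w \<in> Wn n \<Longrightarrow> annihilated_in n w"
proof (induction n arbitrary: w rule: less_induct)
  case (less n)
  have "annihilated_in n g" if "g \<in> generators n" for g
    using that unfolding generators_def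
  proof (elim UnE imageE CollectE exE conjE)
    fix f assume "f \<in> F" "g = P.proj n f"
    then show ?thesis
      by (simp add: annihilated_in_proj_F)
  next
    fix b y k assume g: "g = YW b (-1) y" "1 \<le> k" "k \<le> n" "b \<in> Vg (int k)" "y \<in> Wn (n - k)"
    then have "annihilated_in (n - k + k) (YW b (-1) y)"
      using less.IH[of "n - k"] by (intro annihilated_in_mode) simp_all
    then show ?thesis
      using g by simp
  qed
  then show ?case
    using annihilated_in_span Wn_subset_span_generators less.prems by blast
qed

lemma gen_eig_proj: "w \<in> L0.gen_eig h \<Longrightarrow> P.proj n w \<in> L0.gen_eig h"
  unfolding L0.gen_eig_iff by (metis proj_polyL P.proj_zero)

lemma gen_eig_admissible:
  assumes "w \<in> Wn n" "w \<in> L0.gen_eig h" "w \<noteq> 0"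
  shows "h \<in> admissible n"
proof -
  obtain p where "L0.polyL p w = 0" "{z. poly p z = 0} \<subseteq> admissible n"
    using annihilated_in_Wn[OF assms(1)] unfolding annihilated_in_def by blast
  then show ?thesis
    using L0.poly_eq_0_if_polyL_eq_0 assms(2,3) by blast
qed

lemma direct_sum_gen_eig: "direct_sum_decomp scW UNIV L0.gen_eig"
  unfolding direct_sum_decomp_def
proof (intro conjI allI impI ballI)
  show "W.subspace (L0.gen_eig h)" for h
    by (rule L0.subspace_gen_eig)
next
  fix w
  have "decomposable L0.gen_eig (P.proj n w)" for n
    using exists_annihilating_poly_Wn[OF P.proj_in] L0.decomposable_gen_eig_if_polyL_eq_0 by blast
  then have "decomposable L0.gen_eig (\<Sum>n\<in>P.supp w. P.proj n w)"
    using L0.subspace_gen_eig by (intro decomposable_sum) (auto intro: W.subspace_0 W.subspace_add)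
  then show "\<exists>F f. finite F \<and> F \<subseteq> UNIV \<and> (\<forall>i\<in>F. f i \<in> L0.gen_eig i) \<and> w = sum f F"
    unfolding decomposable_def P.sum_proj_supp by simp
next
  fix F f i
  assume "finite F \<and> F \<subseteq> UNIV \<and> (\<forall>i\<in>F. f i \<in> L0.gen_eig i) \<and> sum f F = 0" "i \<in> F"
  then show "f i = 0"
    using L0.gen_eig_independent by blast
qed

text \<open>Only the finitely many \<open>W(n)\<close> with \<open>h \<in> admissible n\<close> meet \<open>W\<^sub>[\<^sub>h\<^sub>]\<close>.\<close>
lemma fin_dim_gen_eig: "fin_dim scW (L0.gen_eig h)"
proof -
  obtain Bn where Bn: "\<And>n. finite (Bn n) \<and> Wn n \<subseteq> W.span (Bn n)"
    using Wn_finitely_spanned by metis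
  define S where "S = {n. h \<in> admissible n}"
  have "S \<subseteq> (\<lambda>(r, d). nat \<lfloor>Re (h - r + of_nat d)\<rfloor>) ` base_roots"
  proof
    fix n assume "n \<in> S"
    then obtain r d where rd: "(r, d) \<in> base_roots" "h = r + of_nat n - of_nat d"
      unfolding S_def admissible_def by auto
    then have e: "h - r + of_nat d = of_nat n"
      by simp
    have "n = (\<lambda>(r, d). nat \<lfloor>Re (h - r + of_nat d)\<rfloor>) (r, d)"
      unfolding case_prod_conv e by simp
    then show "n \<in> (\<lambda>(r, d). nat \<lfloor>Re (h - r + of_nat d)\<rfloor>) ` base_roots"
      using rd(1) by (rule image_eqI)
  qed
  then have "finite S"
    using finite_base_roots finite_subset by blast
  define B where "B = (\<Union>n\<in>S. Bn n)"
  have "finite B"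
    unfolding B_def using \<open>finite S\<close> Bn by blast
  moreover have "L0.gen_eig h \<subseteq> W.span B"
  proof
    fix w assume w: "w \<in> L0.gen_eig h"
    have "P.proj n w \<in> W.span B" if "n \<in> P.supp w" for n
    proof -
      have "h \<in> admissible n"
        using that gen_eig_admissible[OF P.proj_in gen_eig_proj[OF w]] by (simp add: P.supp_def)
      then have "Bn n \<subseteq> B"
        unfolding B_def S_def by blast
      then show ?thesis
        using Bn P.proj_in W.span_mono by blast
    qed
    then have "(\<Sum>n\<in>P.supp w. P.proj n w) \<in> W.span B"
      by (intro W.span_sum) blast
    then show "w \<in> W.span B"
      by (simp add: P.sum_proj_supp)
  qed
  ultimately show ?thesis
    by (rule fin_dim_if_subset_span[OF W.vector_space_axioms L0.subspace_gen_eig])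
qed

text \<open>If \<open>h + j\<close> is an eigenvalue, then \<open>Re h + j = Re r + n - d \<ge> Re r - d\<close> for some base root.\<close>
lemma gen_eig_bounded_below: "\<exists>N. \<forall>j::int. j \<le> N \<longrightarrow> L0.gen_eig (h + of_int j) = {0}"
proof -
  define B where "B = Min ((\<lambda>(r, d). Re r - real d) ` base_roots)"
  have B: "B \<le> Re r - real d" if "(r, d) \<in> base_roots" for r d
    unfolding B_def using finite_base_roots that by (intro Min_le) force+
  have "L0.gen_eig (h + of_int j) = {0}" if "j < B - Re h" for j
  proof (rule ccontr)
    assume "L0.gen_eig (h + of_int j) \<noteq> {0}"
    then obtain w where w: "w \<in> L0.gen_eig (h + of_int j)" "w \<noteq> 0"
      using W.subspace_0[OF L0.subspace_gen_eig] by blast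
    obtain n where "P.proj n w \<noteq> 0"
      using P.eq_0_if_proj_eq_0 w(2) by blast
    then have "h + of_int j \<in> admissible n"
      by (rule gen_eig_admissible[OF P.proj_in gen_eig_proj[OF w(1)]])
    then obtain r d where "(r, d) \<in> base_roots" "h + of_int j = r + of_nat n - of_nat d"
      unfolding admissible_def by auto
    then have "Re h + j = Re r + real n - real d" and "B \<le> Re r - real d"
      using B by (auto simp: complex_eq_iff)
    then show False
      using that by linarith
  qed
  moreover have "j < B - Re h" if "j \<le> \<lfloor>B - Re h\<rfloor> - 1" for j :: int
    using that of_int_floor_le[of "B - Re h"] by linarith
  ultimately show ?thesis
    by blast
qed

lemma grading_restricted: "grading_restricted_generalized_module scW YW \<omega>"
  unfolding grading_restricted_generalized_module_def generalized_module_def gen_eigenspace_eq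
  using direct_sum_gen_eig fin_dim_gen_eig gen_eig_bounded_below by blast

end

theorem proposition2:
  fixes scV :: "complex \<Rightarrow> 'v::ab_group_add \<Rightarrow> 'v"
    and Vg :: "int \<Rightarrow> 'v set"
    and Y :: "'v \<Rightarrow> int \<Rightarrow> 'v \<Rightarrow> 'v"
    and vac \<omega> :: 'v
    and c :: complex
    and scW :: "complex \<Rightarrow> 'w::ab_group_add \<Rightarrow> 'w"
    and YW :: "'v \<Rightarrow> int \<Rightarrow> 'w \<Rightarrow> 'w"
  assumes "is_VOA scV Vg Y vac \<omega> c"
    and "is_weak_module scV Y vac scW YW"
  shows "(C1_cofinite scV Vg scW YW \<and> grading_restricted_generalized_module scW YW \<omega>)
     \<longleftrightarrow> (C1_cofinite scV Vg scW YW \<and> N_gradable Vg scW YW)"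
proof (intro iffI conjI; (elim conjE)?)
  assume "grading_restricted_generalized_module scW YW \<omega>"
  then interpret grading_restricted_voa_module scV Y vac scW YW Vg \<omega> c
    using assms by unfold_locales
  show "N_gradable Vg scW YW"
    by (rule N_gradable)
next
  assume "C1_cofinite scV Vg scW YW" "N_gradable Vg scW YW"
  then obtain F Wn where "finite F" "module.span scW (F \<union> C1 scV Vg scW YW) = UNIV"
    and "direct_sum_decomp scW UNIV Wn"
    and "\<And>k m n v w. v \<in> Vg k \<Longrightarrow> w \<in> Wn n \<Longrightarrow>
      (if k + int n - m - 1 \<ge> 0 then YW v m w \<in> Wn (nat (k + int n - m - 1)) else YW v m w = 0)"
    unfolding C1_cofinite_def N_gradable_def by blast
  then interpret cofinite_graded_voa_module scV Y vac scW YW Vg \<omega> c Wn F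
    using assms by unfold_locales
  show "grading_restricted_generalized_module scW YW \<omega>"
    by (rule grading_restricted)
qed

end
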